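(* Let $\mu$ be a limit ordinal and let $\langle \mathcal B^\nu:\nu<\mu\rangle$ be a $\preceq$-increasing sequence of base-enumerations, $\mathcal B^\nu=\langle B^\nu_i:i<\xi^\nu\rangle$, generating topologies $\tau^\nu$ on sets $X^\nu$. Put $\xi^\mu=\sup_{\nu<\mu}\xi^\nu$ and, for $i<\xi^\mu$, $B^\mu_i=\bigcup\{B^\nu_i:\nu<\mu,\ i<\xi^\nu\}$. Then $\mathcal B^\mu=\langle B^\mu_i:i<\xi^\mu\rangle$ is a base-enumeration and $\mathcal B^\nu\preceq\mathcal B^\mu$ for each $\nu<\mu$. Moreover, if $\tau^\nu$ is Hausdorff for cofinally many $\nu<\mu$, then the topology $\tau^\mu$ generated by $\mathcal B^\mu$ is Hausdorff. Finally, if $\sigma<\mu$, $a\in X^\sigma$, $A\subseteq X^\sigma$ and $a\in\overline{A}^{\tau^\nu}$ for every $\nu$ with $\sigma<\nu<\mu$, then $a\in\overline{A}^{\tau^\mu}$.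
   Context: A base-enumeration is a sequence $\langle B_i:i<\xi\rangle$, for some ordinal $\xi$, such that $\{B_i:i<\xi\}$ is a base consisting of clopen sets for a (not necessarily Hausdorff) topology $\tau$ on some set $X$ (namely $X=\bigcup_i B_i$). For base-enumerations $\mathcal B^0=\langle B^0_i:i<\xi^0\rangle$ on $X^0$ and $\mathcal B^1=\langle B^1_i:i<\xi^1\rangle$ on $X^1$, write $\mathcal B^0\preceq\mathcal B^1$ iff (1) $X^0\subseteq X^1$ and $\xi^0\le\xi^1$; (2) $B^0_i=B^1_i\cap X^0$ for $i<\xi^0$; (3) for $i,j<\xi^0$, $B^0_i\subseteq B^0_j$ iff $B^1_i\subseteq B^1_j$; (4) for $i,j<\xi^0$, $B^0_i\cap B^0_j=\emptyset$ iff $B^1_i\cap B^1_j=\emptyset$. *)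

theory Defs
  imports "HOL-Analysis.Analysis"
begin

text \<open>Ordinals are represented by initial segments of a well-ordered type:
  an ordinal xi is the set of indices i < xi.\<close>

definition init_seg :: "'i::wellorder set \<Rightarrow> bool" where
  "init_seg I \<longleftrightarrow> (\<forall>i\<in>I. \<forall>j. j < i \<longrightarrow> j \<in> I)"

definition limit_seg :: "'i::wellorder set \<Rightarrow> bool" where
  "limit_seg M \<longleftrightarrow> init_seg M \<and> M \<noteq> {} \<and> (\<forall>v\<in>M. \<exists>w\<in>M. v < w)"

definition enum_space :: "'i set \<Rightarrow> ('i \<Rightarrow> 'a set) \<Rightarrow> 'a set" where
  "enum_space I B = (\<Union>i\<in>I. B i)"

definition gen_open :: "'i set \<Rightarrow> ('i \<Rightarrow> 'a set) \<Rightarrow> 'a set \<Rightarrow> bool" where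
  "gen_open I B U \<longleftrightarrow> (\<exists>F. F \<subseteq> B ` I \<and> U = \<Union>F)"

definition gen_top :: "'i set \<Rightarrow> ('i \<Rightarrow> 'a set) \<Rightarrow> 'a topology" where
  "gen_top I B = topology (gen_open I B)"

definition base_enum :: "'i::wellorder set \<Rightarrow> ('i \<Rightarrow> 'a set) \<Rightarrow> bool" where
  "base_enum I B \<longleftrightarrow> init_seg I \<and> istopology (gen_open I B)
     \<and> (\<forall>i\<in>I. openin (gen_top I B) (B i) \<and> closedin (gen_top I B) (B i))"

definition enum_prec ::
  "'i::wellorder set \<Rightarrow> ('i \<Rightarrow> 'a set) \<Rightarrow> 'i set \<Rightarrow> ('i \<Rightarrow> 'a set) \<Rightarrow> bool" where
  "enum_prec I0 B0 I1 B1 \<longleftrightarrow>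
     enum_space I0 B0 \<subseteq> enum_space I1 B1 \<and> I0 \<subseteq> I1
     \<and> (\<forall>i\<in>I0. B0 i = B1 i \<inter> enum_space I0 B0)
     \<and> (\<forall>i\<in>I0. \<forall>j\<in>I0. B0 i \<subseteq> B0 j \<longleftrightarrow> B1 i \<subseteq> B1 j)
     \<and> (\<forall>i\<in>I0. \<forall>j\<in>I0. B0 i \<inter> B0 j = {} \<longleftrightarrow> B1 i \<inter> B1 j = {})"

text \<open>The limit enumeration: xi^mu = sup of xi^nu, B^mu_i = union of the B^nu_i.\<close>
definition lim_idx :: "'n set \<Rightarrow> ('n \<Rightarrow> 'i set) \<Rightarrow> 'i set" where
  "lim_idx M Is = (\<Union>v\<in>M. Is v)"

definition lim_base :: "'n set \<Rightarrow> ('n \<Rightarrow> 'i set) \<Rightarrow> ('n \<Rightarrow> 'i \<Rightarrow> 'a set) \<Rightarrow> 'i \<Rightarrow> 'a set" where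
  "lim_base M Is Bs i = \<Union>{Bs v i | v. v \<in> M \<and> i \<in> Is v}"

end

theory Submission imports Defs begin

text \<open>Because the sequence is increasing and linearly ordered, finitely many indices and points
  of the limit enumeration already occur together at some stage \<open>\<nu>\<close>, and there
  \<open>B\<^sup>\<mu>\<^sub>i \<inter> X\<^sup>\<nu> = B\<^sup>\<nu>\<^sub>i\<close>; moreover \<open>\<preceq>\<close> preserves inclusion and disjointness of basic sets.
  Every property to be verified (the base axiom, clopenness, Hausdorff separation, basic
  neighbourhoods meeting \<open>A\<close>) concerns finitely many basic sets and points, so it can be read
  off at one sufficiently late stage.\<close>

lemma gen_open_iff:
  "gen_open I B U \<longleftrightarrow> (\<forall>x\<in>U. \<exists>k\<in>I. x \<in> B k \<and> B k \<subseteq> U)"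
proof
  assume "gen_open I B U"
  then show "\<forall>x\<in>U. \<exists>k\<in>I. x \<in> B k \<and> B k \<subseteq> U"
    unfolding gen_open_def by blast
next
  assume "\<forall>x\<in>U. \<exists>k\<in>I. x \<in> B k \<and> B k \<subseteq> U"
  then have "U = \<Union>{B k | k. k \<in> I \<and> B k \<subseteq> U}" by blast
  moreover have "{B k | k. k \<in> I \<and> B k \<subseteq> U} \<subseteq> B ` I" by blast
  ultimately show "gen_open I B U"
    unfolding gen_open_def by blast
qed

lemma gen_open_basic: "k \<in> I \<Longrightarrow> gen_open I B (B k)"
  unfolding gen_open_iff by blast

definition base_condition :: "'i set \<Rightarrow> ('i \<Rightarrow> 'a set) \<Rightarrow> bool" where
  "base_condition I B \<longleftrightarrow>
     (\<forall>i\<in>I. \<forall>j\<in>I. \<forall>x\<in>B i \<inter> B j. \<exists>k\<in>I. x \<in> B k \<and> B k \<subseteq> B i \<inter> B j)"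

lemma istopology_gen_open_iff: "istopology (gen_open I B) \<longleftrightarrow> base_condition I B"
proof
  assume top: "istopology (gen_open I B)"
  have inter: "gen_open I B (S \<inter> T)" if "gen_open I B S" "gen_open I B T" for S T
    using top that unfolding istopology_def by blast
  show "base_condition I B"
    unfolding base_condition_def
  proof (intro ballI)
    fix i j x assume "i \<in> I" "j \<in> I" and x: "x \<in> B i \<inter> B j"
    then have "gen_open I B (B i \<inter> B j)"
      by (intro inter gen_open_basic)
    with x show "\<exists>k\<in>I. x \<in> B k \<and> B k \<subseteq> B i \<inter> B j"
      unfolding gen_open_iff by blast
  qed
next
  assume base: "base_condition I B"
  have "gen_open I B (S \<inter> T)" if S: "gen_open I B S" and T: "gen_open I B T" for S T
    unfolding gen_open_iff
  proof
    fix x assume "x \<in> S \<inter> T"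
    then obtain i j where ij: "i \<in> I" "j \<in> I" "x \<in> B i \<inter> B j" and "B i \<subseteq> S" "B j \<subseteq> T"
      using S T unfolding gen_open_iff by blast
    moreover obtain k where "k \<in> I" "x \<in> B k" "B k \<subseteq> B i \<inter> B j"
      using base ij unfolding base_condition_def by blast
    ultimately show "\<exists>k\<in>I. x \<in> B k \<and> B k \<subseteq> S \<inter> T"
      by blast
  qed
  moreover have "gen_open I B (\<Union>\<K>)" if "\<forall>K\<in>\<K>. gen_open I B K" for \<K>
    using that unfolding gen_open_iff by (meson Union_iff Union_upper order_trans)
  ultimately show "istopology (gen_open I B)"
    unfolding istopology_def by blast
qed

lemma openin_gen_top: "base_condition I B \<Longrightarrow> openin (gen_top I B) U \<longleftrightarrow> gen_open I B U"
  by (simp add: gen_top_def istopology_gen_open_iff[symmetric])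

lemma topspace_gen_top:
  assumes "base_condition I B"
  shows "topspace (gen_top I B) = enum_space I B"
proof -
  have "gen_open I B (enum_space I B)" "\<And>U. gen_open I B U \<Longrightarrow> U \<subseteq> enum_space I B"
    unfolding gen_open_iff enum_space_def by blast+
  then show ?thesis
    unfolding topspace_def openin_gen_top[OF assms] by blast
qed

lemma Hausdorff_space_gen_top_iff:
  assumes base: "base_condition I B"
  shows "Hausdorff_space (gen_top I B) \<longleftrightarrow>
    (\<forall>x\<in>enum_space I B. \<forall>y\<in>enum_space I B. x \<noteq> y \<longrightarrow>
       (\<exists>i\<in>I. \<exists>j\<in>I. x \<in> B i \<and> y \<in> B j \<and> B i \<inter> B j = {}))"
proof -
  have "(\<exists>U V. gen_open I B U \<and> gen_open I B V \<and> x \<in> U \<and> y \<in> V \<and> disjnt U V) \<longleftrightarrow>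
      (\<exists>i\<in>I. \<exists>j\<in>I. x \<in> B i \<and> y \<in> B j \<and> B i \<inter> B j = {})" for x y
  proof
    assume "\<exists>U V. gen_open I B U \<and> gen_open I B V \<and> x \<in> U \<and> y \<in> V \<and> disjnt U V"
    then obtain U V where "gen_open I B U" "gen_open I B V" "x \<in> U" "y \<in> V" "disjnt U V"
      by blast
    then obtain i j where "i \<in> I" "j \<in> I" "x \<in> B i" "y \<in> B j" "B i \<subseteq> U" "B j \<subseteq> V"
      unfolding gen_open_iff by meson
    with \<open>disjnt U V\<close> show "\<exists>i\<in>I. \<exists>j\<in>I. x \<in> B i \<and> y \<in> B j \<and> B i \<inter> B j = {}"
      unfolding disjnt_def by blast
  next
    assume "\<exists>i\<in>I. \<exists>j\<in>I. x \<in> B i \<and> y \<in> B j \<and> B i \<inter> B j = {}"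
    then obtain i j where "i \<in> I" "j \<in> I" "x \<in> B i" "y \<in> B j" "B i \<inter> B j = {}"
      by blast
    with gen_open_basic[of i I B] gen_open_basic[of j I B]
    show "\<exists>U V. gen_open I B U \<and> gen_open I B V \<and> x \<in> U \<and> y \<in> V \<and> disjnt U V"
      unfolding disjnt_def by blast
  qed
  then show ?thesis
    unfolding Hausdorff_space_def topspace_gen_top[OF base] openin_gen_top[OF base] by blast
qed

lemma in_closure_of_gen_top_iff:
  assumes "base_condition I B"
  shows "a \<in> gen_top I B closure_of A \<longleftrightarrow>
    a \<in> enum_space I B \<and> (\<forall>i\<in>I. a \<in> B i \<longrightarrow> B i \<inter> A \<noteq> {})"
  unfolding closure_of_def topspace_gen_top[OF assms] openin_gen_top[OF assms] gen_open_iff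
  by blast

lemma base_enum_iff:
  "base_enum I B \<longleftrightarrow> init_seg I \<and> base_condition I B \<and>
     (\<forall>i\<in>I. \<forall>x\<in>enum_space I B - B i. \<exists>k\<in>I. x \<in> B k \<and> B k \<inter> B i = {})"
proof -
  have clopen_iff: "openin (gen_top I B) (B i) \<and> closedin (gen_top I B) (B i) \<longleftrightarrow>
      (\<forall>x\<in>enum_space I B - B i. \<exists>k\<in>I. x \<in> B k \<and> B k \<inter> B i = {})"
    if base: "base_condition I B" and i: "i \<in> I" for i
  proof -
    have basic_sub: "B k \<subseteq> enum_space I B" if "k \<in> I" for k
      using that unfolding enum_space_def by blast
    have "openin (gen_top I B) (B i)"
      using i gen_open_basic by (simp add: openin_gen_top[OF base])
    then have "openin (gen_top I B) (B i) \<and> closedin (gen_top I B) (B i) \<longleftrightarrow>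
        gen_open I B (enum_space I B - B i)"
      using basic_sub[OF i] by (simp add: closedin_def topspace_gen_top[OF base] openin_gen_top[OF base])
    also have "\<dots> \<longleftrightarrow> (\<forall>x\<in>enum_space I B - B i. \<exists>k\<in>I. x \<in> B k \<and> B k \<inter> B i = {})"
    proof -
      have "B k \<subseteq> enum_space I B - B i \<longleftrightarrow> B k \<inter> B i = {}" if "k \<in> I" for k
        using basic_sub[OF that] by blast
      then show ?thesis
        unfolding gen_open_iff by (metis (no_types, lifting))
    qed
    finally show ?thesis .
  qed
  then show ?thesis
    unfolding base_enum_def istopology_gen_open_iff by blast
qed

lemma enum_prec_subset_iff:
  "enum_prec I0 B0 I1 B1 \<Longrightarrow> i \<in> I0 \<Longrightarrow> j \<in> I0 \<Longrightarrow> B0 i \<subseteq> B0 j \<longleftrightarrow> B1 i \<subseteq> B1 j"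
  unfolding enum_prec_def by blast

lemma enum_prec_disjoint_iff:
  "enum_prec I0 B0 I1 B1 \<Longrightarrow> i \<in> I0 \<Longrightarrow> j \<in> I0 \<Longrightarrow> B0 i \<inter> B0 j = {} \<longleftrightarrow> B1 i \<inter> B1 j = {}"
  unfolding enum_prec_def by blast

locale base_enum_chain =
  fixes M :: "'n::linorder set"
    and Is :: "'n \<Rightarrow> 'i::wellorder set"
    and Bs :: "'n \<Rightarrow> 'i \<Rightarrow> 'a set"
  assumes base_enum_stage: "v \<in> M \<Longrightarrow> base_enum (Is v) (Bs v)"
    and enum_prec_stages: "v \<in> M \<Longrightarrow> w \<in> M \<Longrightarrow> v \<le> w \<Longrightarrow> enum_prec (Is v) (Bs v) (Is w) (Bs w)"
begin

abbreviation X :: "'n \<Rightarrow> 'a set" where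
  "X v \<equiv> enum_space (Is v) (Bs v)"

abbreviation I_lim :: "'i set" where
  "I_lim \<equiv> lim_idx M Is"

abbreviation B_lim :: "'i \<Rightarrow> 'a set" where
  "B_lim \<equiv> lim_base M Is Bs"

lemma base_condition_stage: "v \<in> M \<Longrightarrow> base_condition (Is v) (Bs v)"
  using base_enum_stage by (simp add: base_enum_iff)

lemma index_mono:
  assumes "v \<in> M" "w \<in> M" "v \<le> w"
  shows "Is v \<subseteq> Is w"
  using enum_prec_stages[OF assms] by (simp add: enum_prec_def)

lemma space_mono:
  assumes "v \<in> M" "w \<in> M" "v \<le> w"
  shows "X v \<subseteq> X w"
  using enum_prec_stages[OF assms] by (simp add: enum_prec_def)

lemma stage_restrict:
  assumes "v \<in> M" "w \<in> M" "v \<le> w" "i \<in> Is v"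
  shows "Bs v i = Bs w i \<inter> X v"
  using enum_prec_stages[OF assms(1-3)] assms(4) by (simp add: enum_prec_def)

lemma mem_lim_idx: "i \<in> I_lim \<longleftrightarrow> (\<exists>v\<in>M. i \<in> Is v)"
  unfolding lim_idx_def by blast

lemma mem_lim_base: "x \<in> B_lim i \<longleftrightarrow> (\<exists>v\<in>M. i \<in> Is v \<and> x \<in> Bs v i)"
  unfolding lim_base_def by blast

lemma lim_space_eq: "enum_space I_lim B_lim = (\<Union>v\<in>M. X v)"
  unfolding enum_space_def lim_idx_def lim_base_def by blast

lemma stage_subset_lim_base: "v \<in> M \<Longrightarrow> i \<in> Is v \<Longrightarrow> Bs v i \<subseteq> B_lim i"
  by (auto simp: mem_lim_base)

lemma lim_base_restrict:
  assumes v: "v \<in> M" and i: "i \<in> Is v"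
  shows "B_lim i \<inter> X v = Bs v i"
proof
  show "Bs v i \<subseteq> B_lim i \<inter> X v"
    using stage_subset_lim_base[OF v i] i by (auto simp: enum_space_def)
  show "B_lim i \<inter> X v \<subseteq> Bs v i"
  proof
    fix x assume x: "x \<in> B_lim i \<inter> X v"
    then obtain w where w: "w \<in> M" "i \<in> Is w" "x \<in> Bs w i"
      by (auto simp: mem_lim_base)
    show "x \<in> Bs v i"
    proof (cases "w \<le> v")
      case True
      then show ?thesis using stage_restrict[OF w(1) v True w(2)] w(3) by blast
    next
      case False
      then show ?thesis using stage_restrict[OF v w(1) _ i] w(3) x by auto
    qed
  qed
qed

lemma mem_lim_base_iff_stage:
  "v \<in> M \<Longrightarrow> i \<in> Is v \<Longrightarrow> x \<in> X v \<Longrightarrow> x \<in> B_lim i \<longleftrightarrow> x \<in> Bs v i"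
  using lim_base_restrict by blast

lemma common_stage:
  assumes "finite J" "J \<subseteq> I_lim" "finite P" "P \<subseteq> enum_space I_lim B_lim" "v \<in> M"
  shows "\<exists>u\<in>M. v \<le> u \<and> J \<subseteq> Is u \<and> P \<subseteq> X u"
  using assms
proof (induction J arbitrary: v rule: finite_induct)
  case empty
  from \<open>finite P\<close> \<open>P \<subseteq> enum_space I_lim B_lim\<close> \<open>v \<in> M\<close> show ?case
  proof (induction P arbitrary: v rule: finite_induct)
    case (insert x P)
    then obtain w where w: "w \<in> M" "x \<in> X w"
      by (auto simp: lim_space_eq)
    moreover have "max v w \<in> M"
      using insert.prems w(1) by (simp add: max_def)
    ultimately obtain u where u: "u \<in> M" "max v w \<le> u" "P \<subseteq> X u"
      using insert.IH insert.prems by blast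
    then have "v \<le> u" "x \<in> X u"
      using space_mono[OF w(1) u(1)] w(2) by auto
    with u show ?case by blast
  qed blast
next
  case (insert i J)
  then obtain w where w: "w \<in> M" "i \<in> Is w"
    by (auto simp: mem_lim_idx)
  moreover have "max v w \<in> M"
    using insert.prems w(1) by (simp add: max_def)
  ultimately obtain u where u: "u \<in> M" "max v w \<le> u" "J \<subseteq> Is u" "P \<subseteq> X u"
    using insert.IH insert.prems by blast
  then have "v \<le> u" "i \<in> Is u"
    using index_mono[OF w(1) u(1)] w(2) by auto
  with u show ?case by blast
qed

lemma lim_base_subset_space: "i \<in> I_lim \<Longrightarrow> B_lim i \<subseteq> enum_space I_lim B_lim"
  unfolding enum_space_def by blast

lemma stage_of_point:
  assumes "v \<in> M" "i \<in> Is v" "x \<in> B_lim i"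
  obtains u where "u \<in> M" "v \<le> u" "i \<in> Is u" "x \<in> X u"
proof -
  have "x \<in> enum_space I_lim B_lim"
    using assms lim_base_subset_space by (auto simp: mem_lim_idx)
  then obtain u where "u \<in> M" "v \<le> u" "x \<in> X u"
    using common_stage[of "{}" "{x}" v] assms(1) by auto
  with index_mono[OF assms(1)] assms(2) show thesis
    using that by blast
qed

lemma lim_base_subset_iff:
  assumes v: "v \<in> M" and i: "i \<in> Is v" and j: "j \<in> Is v"
  shows "B_lim i \<subseteq> B_lim j \<longleftrightarrow> Bs v i \<subseteq> Bs v j"
proof
  assume "B_lim i \<subseteq> B_lim j"
  then show "Bs v i \<subseteq> Bs v j"
    using lim_base_restrict[OF v i] lim_base_restrict[OF v j] by blast
next
  assume sub: "Bs v i \<subseteq> Bs v j"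
  show "B_lim i \<subseteq> B_lim j"
  proof
    fix x assume x: "x \<in> B_lim i"
    then obtain u where u: "u \<in> M" "v \<le> u" "i \<in> Is u" "x \<in> X u"
      using stage_of_point v i by blast
    have ju: "j \<in> Is u"
      using index_mono[OF v u(1,2)] j by blast
    have "Bs u i \<subseteq> Bs u j"
      using sub enum_prec_subset_iff[OF enum_prec_stages[OF v u(1,2)] i j] by blast
    then show "x \<in> B_lim j"
      using x mem_lim_base_iff_stage[OF u(1,3,4)] mem_lim_base_iff_stage[OF u(1) ju u(4)] by blast
  qed
qed

lemma lim_base_disjoint_iff:
  assumes v: "v \<in> M" and i: "i \<in> Is v" and j: "j \<in> Is v"
  shows "B_lim i \<inter> B_lim j = {} \<longleftrightarrow> Bs v i \<inter> Bs v j = {}"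
proof
  assume "B_lim i \<inter> B_lim j = {}"
  then show "Bs v i \<inter> Bs v j = {}"
    using stage_subset_lim_base[OF v i] stage_subset_lim_base[OF v j] by blast
next
  assume disj: "Bs v i \<inter> Bs v j = {}"
  show "B_lim i \<inter> B_lim j = {}"
  proof (rule ccontr)
    assume "B_lim i \<inter> B_lim j \<noteq> {}"
    then obtain x where x: "x \<in> B_lim i" "x \<in> B_lim j"
      by blast
    then obtain u where u: "u \<in> M" "v \<le> u" "i \<in> Is u" "x \<in> X u"
      using stage_of_point v i by blast
    have ju: "j \<in> Is u"
      using index_mono[OF v u(1,2)] j by blast
    have "Bs u i \<inter> Bs u j = {}"
      using disj enum_prec_disjoint_iff[OF enum_prec_stages[OF v u(1,2)] i j] by blast
    then show False
      using x mem_lim_base_iff_stage[OF u(1,3,4)] mem_lim_base_iff_stage[OF u(1) ju u(4)] by blast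
  qed
qed

lemma enum_prec_lim: "v \<in> M \<Longrightarrow> enum_prec (Is v) (Bs v) I_lim B_lim"
  unfolding enum_prec_def lim_space_eq
  by (auto simp: mem_lim_idx lim_base_restrict lim_base_subset_iff lim_base_disjoint_iff)

lemma base_enum_lim: "base_enum I_lim B_lim"
  unfolding base_enum_iff
proof (intro conjI ballI)
  show "init_seg I_lim"
    unfolding init_seg_def
  proof (intro ballI allI impI)
    fix i j assume "i \<in> I_lim" "j < i"
    then obtain v where "v \<in> M" "i \<in> Is v"
      by (auto simp: mem_lim_idx)
    moreover have "init_seg (Is v)"
      using base_enum_stage[OF \<open>v \<in> M\<close>] by (simp add: base_enum_def)
    ultimately show "j \<in> I_lim"
      using \<open>j < i\<close> unfolding init_seg_def mem_lim_idx by blast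
  qed
next
  show "base_condition I_lim B_lim"
    unfolding base_condition_def
  proof (intro ballI)
    fix i j x assume i: "i \<in> I_lim" and j: "j \<in> I_lim" and x: "x \<in> B_lim i \<inter> B_lim j"
    then obtain v where v: "v \<in> M"
      by (auto simp: mem_lim_idx)
    have "x \<in> enum_space I_lim B_lim"
      using i x lim_base_subset_space by blast
    then obtain u where u: "u \<in> M" "i \<in> Is u" "j \<in> Is u" "x \<in> X u"
      using common_stage[of "{i, j}" "{x}" v] i j v by auto
    then have "x \<in> Bs u i \<inter> Bs u j"
      using x mem_lim_base_iff_stage by blast
    then obtain k where k: "k \<in> Is u" "x \<in> Bs u k" "Bs u k \<subseteq> Bs u i \<inter> Bs u j"
      using base_condition_stage[OF u(1)] u(2,3) unfolding base_condition_def by blast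
    then have "B_lim k \<subseteq> B_lim i \<inter> B_lim j"
      using lim_base_subset_iff[OF u(1) k(1)] u(2,3) by auto
    moreover have "k \<in> I_lim" "x \<in> B_lim k"
      using k u(1) stage_subset_lim_base by (auto simp: mem_lim_idx)
    ultimately show "\<exists>k\<in>I_lim. x \<in> B_lim k \<and> B_lim k \<subseteq> B_lim i \<inter> B_lim j"
      by blast
  qed
next
  fix i x assume i: "i \<in> I_lim" and x: "x \<in> enum_space I_lim B_lim - B_lim i"
  then obtain v where v: "v \<in> M"
    by (auto simp: mem_lim_idx)
  obtain u where u: "u \<in> M" "i \<in> Is u" "x \<in> X u"
    using common_stage[of "{i}" "{x}" v] i x v by auto
  then have "x \<notin> Bs u i"
    using x mem_lim_base_iff_stage by blast
  then obtain k where k: "k \<in> Is u" "x \<in> Bs u k" "Bs u k \<inter> Bs u i = {}"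
    using base_enum_stage[OF u(1)] u(2,3) unfolding base_enum_iff by blast
  then have "B_lim k \<inter> B_lim i = {}"
    using lim_base_disjoint_iff[OF u(1) k(1) u(2)] by blast
  moreover have "k \<in> I_lim" "x \<in> B_lim k"
    using k u(1) stage_subset_lim_base by (auto simp: mem_lim_idx)
  ultimately show "\<exists>k\<in>I_lim. x \<in> B_lim k \<and> B_lim k \<inter> B_lim i = {}"
    by blast
qed

lemma base_condition_lim: "base_condition I_lim B_lim"
  using base_enum_lim by (simp add: base_enum_iff)

lemma Hausdorff_space_lim:
  assumes Hausdorff_cofinal: "\<forall>v\<in>M. \<exists>w\<in>M. v \<le> w \<and> Hausdorff_space (gen_top (Is w) (Bs w))"
  shows "Hausdorff_space (gen_top I_lim B_lim)"
  unfolding Hausdorff_space_gen_top_iff[OF base_condition_lim]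
proof (intro ballI impI)
  fix x y assume x: "x \<in> enum_space I_lim B_lim" and y: "y \<in> enum_space I_lim B_lim" and "x \<noteq> y"
  obtain v where v: "v \<in> M"
    using x by (auto simp: lim_space_eq)
  obtain u where u: "u \<in> M" "x \<in> X u" "y \<in> X u"
    using common_stage[of "{}" "{x, y}" v] x y v by auto
  obtain w where w: "w \<in> M" "u \<le> w" "Hausdorff_space (gen_top (Is w) (Bs w))"
    using Hausdorff_cofinal u(1) by blast
  have "x \<in> X w" "y \<in> X w"
    using space_mono[OF u(1) w(1,2)] u(2,3) by auto
  then obtain i j where ij: "i \<in> Is w" "j \<in> Is w" "x \<in> Bs w i" "y \<in> Bs w j" "Bs w i \<inter> Bs w j = {}"
    using w(3) \<open>x \<noteq> y\<close> unfolding Hausdorff_space_gen_top_iff[OF base_condition_stage[OF w(1)]] by blast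
  then have "B_lim i \<inter> B_lim j = {}" "x \<in> B_lim i" "y \<in> B_lim j" "i \<in> I_lim" "j \<in> I_lim"
    using lim_base_disjoint_iff[OF w(1) ij(1,2)] stage_subset_lim_base[OF w(1)] w(1)
    by (auto simp: mem_lim_idx)
  then show "\<exists>i\<in>I_lim. \<exists>j\<in>I_lim. x \<in> B_lim i \<and> y \<in> B_lim j \<and> B_lim i \<inter> B_lim j = {}"
    by blast
qed

lemma in_closure_of_lim:
  assumes s: "s \<in> M" "\<exists>w\<in>M. s < w"
    and closure_later: "\<forall>v\<in>M. s < v \<longrightarrow> a \<in> gen_top (Is v) (Bs v) closure_of A"
  shows "a \<in> gen_top I_lim B_lim closure_of A"
  unfolding in_closure_of_gen_top_iff[OF base_condition_lim]
proof (intro conjI ballI impI)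
  obtain w where w: "w \<in> M" "s < w"
    using s(2) by blast
  have closure_at: "a \<in> X v \<and> (\<forall>i\<in>Is v. a \<in> Bs v i \<longrightarrow> Bs v i \<inter> A \<noteq> {})" if "v \<in> M" "w \<le> v" for v
    using closure_later that w(2) in_closure_of_gen_top_iff[OF base_condition_stage[OF \<open>v \<in> M\<close>]]
    by auto
  then show "a \<in> enum_space I_lim B_lim"
    using w(1) by (auto simp: lim_space_eq)
  fix i assume i: "i \<in> I_lim" and a: "a \<in> B_lim i"
  obtain u where u: "u \<in> M" "w \<le> u" "i \<in> Is u"
    using common_stage[of "{i}" "{}" w] i w(1) by auto
  then have "a \<in> Bs u i" "Bs u i \<inter> A \<noteq> {}"
    using closure_at[OF u(1,2)] a mem_lim_base_iff_stage by blast+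
  then show "B_lim i \<inter> A \<noteq> {}"
    using stage_subset_lim_base[OF u(1,3)] by blast
qed

end

theorem lemma2p2:
  fixes M :: "'n::wellorder set"
    and Is :: "'n \<Rightarrow> 'i::wellorder set"
    and Bs :: "'n \<Rightarrow> 'i \<Rightarrow> 'a set"
  assumes lim: "limit_seg M"
    and enum: "\<forall>v\<in>M. base_enum (Is v) (Bs v)"
    and incr: "\<forall>v\<in>M. \<forall>w\<in>M. v \<le> w \<longrightarrow> enum_prec (Is v) (Bs v) (Is w) (Bs w)"
  shows "base_enum (lim_idx M Is) (lim_base M Is Bs)
    \<and> (\<forall>v\<in>M. enum_prec (Is v) (Bs v) (lim_idx M Is) (lim_base M Is Bs))
    \<and> ((\<forall>v\<in>M. \<exists>w\<in>M. v \<le> w \<and> Hausdorff_space (gen_top (Is w) (Bs w)))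
         \<longrightarrow> Hausdorff_space (gen_top (lim_idx M Is) (lim_base M Is Bs)))
    \<and> (\<forall>s\<in>M. \<forall>a A. a \<in> enum_space (Is s) (Bs s) \<and> A \<subseteq> enum_space (Is s) (Bs s)
         \<and> (\<forall>v\<in>M. s < v \<longrightarrow> a \<in> gen_top (Is v) (Bs v) closure_of A)
         \<longrightarrow> a \<in> gen_top (lim_idx M Is) (lim_base M Is Bs) closure_of A)"
proof -
  interpret base_enum_chain M Is Bs
    using enum incr by unfold_locales auto
  have "\<exists>w\<in>M. s < w" if "s \<in> M" for s
    using lim that unfolding limit_seg_def by blast
  then show ?thesis
    using base_enum_lim enum_prec_lim Hausdorff_space_lim in_closure_of_lim by blast
qed

end
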